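(* Let $\mathcal{A}$ be a finite totally ordered alphabet and let $\mathbf{Plax}(\mathcal{A})$ be the plactic monoid over $\mathcal{A}$. Then $\mathbf{Plax}(\mathcal{A})$ is of type 1: for every function $\sigma:\mathcal{A}\to\mathbb{N}_{\geq 2}$, the map $\phi_\sigma=\theta\times\operatorname{ev}_\sigma:\mathbf{Plax}(\mathcal{A},\sigma)\to \mathbf{Plax}(\mathcal{A},2)\times\mathbf{Com}(\mathcal{A},\sigma)$ is injective.
   Context: The plactic monoid $\mathbf{Plax}(\mathcal{A})$ is the quotient of the free monoid $\mathcal{A}^*$ by the relations $acb=cab$ for $a\le b<c$ and $bac=bca$ for $a<b\le c$ ($a,b,c\in\mathcal{A}$). For $\sigma:\mathcal{A}\to\mathbb{N}_{\geq2}$, $\mathbf{Plax}(\mathcal{A},\sigma)$ is the quotient of $\mathbf{Plax}(\mathcal{A})$ obtained by adding the relations $a^{\sigma(a)}=a$ for every $a\in\mathcal{A}$; $\mathbf{Plax}(\mathcal{A},2)$ is the case where $\sigma$ is constant equal to $2$. $\mathbf{Com}(\mathcal{A},\sigma)$ is the quotient of the free commutative monoid on $\mathcal{A}$ by the relations $a^{\sigma(a)}=a$, $a\in\mathcal{A}$. The map $\theta:\mathbf{Plax}(\mathcal{A},\sigma)\to\mathbf{Plax}(\mathcal{A},2)$ and $\operatorname{ev}_\sigma:\mathbf{Plax}(\mathcal{A},\sigma)\to\mathbf{Com}(\mathcal{A},\sigma)$ are the natural surjective morphisms (induced by the identity on $\mathcal{A}$), and $\phi_\sigma(x)=(\theta(x),\operatorname{ev}_\sigma(x))$.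 *)

theory Defs
  imports Main
begin

text \<open>A monoid presented by generators and
relations is represented by the congruence on the free monoid generated by the
defining relations; elements of the quotient are congruence classes.\<close>

inductive word_cong :: "('a list \<times> 'a list) set \<Rightarrow> 'a list \<Rightarrow> 'a list \<Rightarrow> bool"
  for R :: "('a list \<times> 'a list) set" where
  wc_rel: "(u, v) \<in> R \<Longrightarrow> word_cong R (x @ u @ y) (x @ v @ y)"
| wc_refl: "word_cong R u u"
| wc_sym: "word_cong R u v \<Longrightarrow> word_cong R v u"
| wc_trans: "word_cong R u v \<Longrightarrow> word_cong R v w \<Longrightarrow> word_cong R u w"

definition knuth_rels :: "('a::linorder list \<times> 'a list) set" where
  "knuth_rels =
     {([a, c, b], [c, a, b]) | a b c. a \<le> b \<and> b < c} \<union>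
     {([b, a, c], [b, c, a]) | a b c. a < b \<and> b \<le> c}"

definition power_rels :: "('a \<Rightarrow> nat) \<Rightarrow> ('a list \<times> 'a list) set" where
  "power_rels \<sigma> = {(replicate (\<sigma> a) a, [a]) | a. True}"

definition comm_rels :: "('a list \<times> 'a list) set" where
  "comm_rels = {([a, b], [b, a]) | a b. True}"

definition plax_sigma_eq :: "('a::linorder \<Rightarrow> nat) \<Rightarrow> 'a list \<Rightarrow> 'a list \<Rightarrow> bool" where
  "plax_sigma_eq \<sigma> = word_cong (knuth_rels \<union> power_rels \<sigma>)"

definition com_sigma_eq :: "('a \<Rightarrow> nat) \<Rightarrow> 'a list \<Rightarrow> 'a list \<Rightarrow> bool" where
  "com_sigma_eq \<sigma> = word_cong (comm_rels \<union> power_rels \<sigma>)"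

end

theory Submission
  imports Defs "HOL-Library.Multiset"
begin

text \<open>
  An inflation of a word u replaces every letter c of u by a nonempty power of c.
  In Plax(A, sigma) a block c^k can be pumped to c^(k + t (sigma c - 1)), and blocks that are
  long enough commute according to the Knuth relations. Hence every defining relation of
  Plax(A, 2), including a a = a, lifts: each inflation of one side is equal in Plax(A, sigma) to
  some inflation of the other side. So if u = v in Plax(A, 2), then u = V in Plax(A, sigma) for
  an inflation V of v, and V has the same letter counts modulo sigma a - 1 as u, hence as v
  when u = v in Com(A, sigma).

  It remains to collapse V onto v. If c does not occur in Y, then large powers of c slide
  through Y in the plactic monoid: c^p Y c^q depends only on p + q. After pumping, this gathers
  all copies of a letter onto its first occurrence in V, and the congruence of counts pumps
  that block down to a single letter.
\<close>

section \<open>Congruences presented by relations\<close>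

lemma word_cong_context: "word_cong R u v \<Longrightarrow> word_cong R (x @ u @ y) (x @ v @ y)"
proof (induction rule: word_cong.induct)
  case (wc_rel u v x' y')
  then show ?case using word_cong.wc_rel[of u v R "x @ x'" "y' @ y"] by simp
qed (auto intro: word_cong.intros)

lemma word_cong_append_left: "word_cong R u v \<Longrightarrow> word_cong R (x @ u) (x @ v)"
  using word_cong_context[of R u v x "[]"] by simp

lemma word_cong_append_right: "word_cong R u v \<Longrightarrow> word_cong R (u @ y) (v @ y)"
  using word_cong_context[of R u v "[]" y] by simp

lemma word_cong_Cons: "word_cong R u v \<Longrightarrow> word_cong R (c # u) (c # v)"
  using word_cong_append_left[of R u v "[c]"] by simp

lemma word_cong_relI: "(u, v) \<in> R \<Longrightarrow> word_cong R u v"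
  using word_cong.wc_rel[of u v R "[]" "[]"] by simp

lemma word_cong_least_preorder:
  assumes "word_cong R u v"
    and refl: "\<And>w. P w w"
    and trans: "\<And>u v w. P u v \<Longrightarrow> P v w \<Longrightarrow> P u w"
    and compatible: "\<And>x u v y. P u v \<Longrightarrow> P (x @ u @ y) (x @ v @ y)"
    and rel: "\<And>l r. (l, r) \<in> R \<Longrightarrow> P l r \<and> P r l"
  shows "P u v"
proof -
  from assms(1) have "P u v \<and> P v u"
  proof (induction rule: word_cong.induct)
    case (wc_rel l r x y)
    then show ?case using rel compatible by blast
  qed (use refl trans in blast)+
  then show ?thesis ..
qed

lemma word_cong_mono: "word_cong R u v \<Longrightarrow> R \<subseteq> R' \<Longrightarrow> word_cong R' u v"
  by (induction rule: word_cong.induct) (auto intro: word_cong.intros)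

lemma word_cong_count_mod:
  assumes "word_cong R u v"
    and "\<And>l r. (l, r) \<in> R \<Longrightarrow> count (mset l) a mod m = count (mset r) a mod m"
  shows "count (mset u) a mod m = count (mset v) a mod m"
  using assms(1)
proof (rule word_cong_least_preorder
    [where P = "\<lambda>u v. count (mset u) a mod m = count (mset v) a mod m"])
  fix x u v y :: "'a list"
  assume "count (mset u) a mod m = count (mset v) a mod m"
  then show "count (mset (x @ u @ y)) a mod m = count (mset (x @ v @ y)) a mod m"
    by simp (metis mod_add_cong)
qed (use assms(2) in auto)

section \<open>Identities in the plactic monoid\<close>

declare word_cong.wc_trans [trans]

abbreviation knuth_eq :: "'a::linorder list \<Rightarrow> 'a list \<Rightarrow> bool" where
  "knuth_eq \<equiv> word_cong knuth_rels"

lemma knuth_eq_mset: "knuth_eq u v \<Longrightarrow> mset u = mset v"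
  by (induction rule: word_cong.induct) (auto simp: knuth_rels_def)

lemma knuth_acb: "a \<le> b \<Longrightarrow> b < c \<Longrightarrow> knuth_eq [a, c, b] [c, a, b]"
  by (rule word_cong_relI) (auto simp: knuth_rels_def)

lemma knuth_bac: "a < b \<Longrightarrow> b \<le> c \<Longrightarrow> knuth_eq [b, a, c] [b, c, a]"
  by (rule word_cong_relI) (auto simp: knuth_rels_def)

lemma knuth_replicate_snoc_less:
  assumes "s < x"
  shows "knuth_eq (replicate (Suc n) x @ [s]) (x # s # replicate n x)"
proof (induction n)
  case 0
  show ?case by (simp add: word_cong.wc_refl)
next
  case (Suc n)
  have "knuth_eq (replicate (Suc (Suc n)) x @ [s]) (x # x # s # replicate n x)"
    using word_cong_Cons[OF Suc.IH, of x] by simp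
  also have "knuth_eq (x # x # s # replicate n x) (x # s # x # replicate n x)"
    using word_cong_append_right[OF word_cong.wc_sym[OF knuth_bac[of s x x]], of "replicate n x"]
      assms
    by simp
  finally show ?case by simp
qed

lemma knuth_Cons_replicate_greater:
  assumes "x < c"
  shows "knuth_eq (c # replicate (Suc n) x) (replicate n x @ [c, x])"
proof (induction n)
  case 0
  show ?case by (simp add: word_cong.wc_refl)
next
  case (Suc n)
  have "knuth_eq (c # replicate (Suc (Suc n)) x) (x # c # replicate (Suc n) x)"
    using word_cong_append_right[OF word_cong.wc_sym[OF knuth_acb[of x x c]], of "replicate n x"]
      assms
    by simp
  also have "knuth_eq (x # c # replicate (Suc n) x) (x # replicate n x @ [c, x])"
    using word_cong_Cons[OF Suc.IH] .
  finally show ?case by (simp add: replicate_app_Cons_same)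
qed

lemma knuth_sorted_jump: "sorted (r @ [d]) \<Longrightarrow> d < c \<Longrightarrow> knuth_eq (r @ [c, d]) (c # r @ [d])"
proof (induction r arbitrary: d rule: rev_induct)
  case Nil
  show ?case by (simp add: word_cong.wc_refl)
next
  case (snoc y r)
  have yd: "y \<le> d" and sorted_ry: "sorted (r @ [y])"
    using snoc.prems(1) by (simp_all add: sorted_append)
  have "knuth_eq (r @ [y, c, d]) (r @ [c, y, d])"
    using word_cong_append_left[OF knuth_acb[OF yd snoc.prems(2)], of r] by simp
  also have "knuth_eq (r @ [c, y, d]) (c # r @ [y, d])"
    using word_cong_append_right[OF snoc.IH[OF sorted_ry], of "[d]"] yd snoc.prems(2) by simp
  finally show ?case by simp
qed

lemma knuth_acb_inflated:
  "sorted r \<Longrightarrow> \<forall>x\<in>set r. x \<le> b \<Longrightarrow> b < c \<Longrightarrow> j \<le> k \<Longrightarrow>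
    knuth_eq (r @ replicate j c @ replicate k b) (replicate j c @ r @ replicate k b)"
proof (induction j arbitrary: r k)
  case 0
  show ?case by (simp add: word_cong.wc_refl)
next
  case (Suc j)
  then obtain k' where k: "k = Suc k'" by (cases k) auto
  have sorted_rb: "sorted (r @ [b])" using Suc.prems by (simp add: sorted_append)
  have "knuth_eq (r @ replicate (Suc j) c @ replicate (Suc k') b)
                 (r @ c # b # replicate j c @ replicate k' b)"
    using word_cong_context[OF knuth_replicate_snoc_less[OF Suc.prems(3), of j],
        of r "replicate k' b"]
    by simp
  also have "knuth_eq (r @ c # b # replicate j c @ replicate k' b)
                      (c # r @ b # replicate j c @ replicate k' b)"
    using word_cong_append_right[OF knuth_sorted_jump[OF sorted_rb Suc.prems(3)],
        of "replicate j c @ replicate k' b"] by simp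
  also have "knuth_eq (c # r @ b # replicate j c @ replicate k' b)
                      (c # replicate j c @ r @ b # replicate k' b)"
    using word_cong_Cons[OF Suc.IH[OF sorted_rb _ Suc.prems(3)], of k' c] Suc.prems k by auto
  finally show ?case
    using k by (simp add: replicate_app_Cons_same)
qed

lemma knuth_bac_replicate:
  assumes "a < b" "b \<le> c"
  shows "knuth_eq (b # replicate k c @ [a]) (b # a # replicate k c)"
proof (cases k)
  case 0
  then show ?thesis by (simp add: word_cong.wc_refl)
next
  case (Suc k')
  have "knuth_eq (b # replicate (Suc k') c @ [a]) (b # c # a # replicate k' c)"
    using word_cong_Cons[OF knuth_replicate_snoc_less[of a c k']] assms by simp
  also have "knuth_eq (b # c # a # replicate k' c) (b # a # c # replicate k' c)"
    using word_cong_append_right[OF word_cong.wc_sym[OF knuth_bac[OF assms]], of "replicate k' c"]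
    by simp
  finally show ?thesis using Suc by simp
qed

lemma knuth_bac_inflated:
  "a < b \<Longrightarrow> b \<le> c \<Longrightarrow> j \<le> i \<Longrightarrow>
    knuth_eq (replicate i b @ replicate k c @ replicate j a)
             (replicate i b @ replicate j a @ replicate k c)"
proof (induction j arbitrary: i)
  case 0
  show ?case by (simp add: word_cong.wc_refl)
next
  case (Suc j)
  then obtain i' where i: "i = Suc i'" by (cases i) auto
  have pull: "knuth_eq (replicate (Suc i') b @ a # w) (b # a # replicate i' b @ w)" for w
    using word_cong_append_right[OF knuth_replicate_snoc_less[OF Suc.prems(1), of i'], of w] by simp
  have "knuth_eq (replicate (Suc i') b @ replicate k c @ replicate (Suc j) a)
                 (replicate (Suc i') b @ a # replicate k c @ replicate j a)"
    using word_cong_context[OF knuth_bac_replicate[OF Suc.prems(1,2), of k],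
        of "replicate i' b" "replicate j a"]
    by (simp add: replicate_app_Cons_same)
  also have "knuth_eq (replicate (Suc i') b @ a # replicate k c @ replicate j a)
                      (b # a # replicate i' b @ replicate k c @ replicate j a)"
    by (rule pull)
  also have "knuth_eq (b # a # replicate i' b @ replicate k c @ replicate j a)
                      (b # a # replicate i' b @ replicate j a @ replicate k c)"
  proof -
    have "knuth_eq (replicate i' b @ replicate k c @ replicate j a)
                   (replicate i' b @ replicate j a @ replicate k c)"
      using Suc.IH[of i'] Suc.prems i by simp
    from word_cong_append_left[OF this, of "[b, a]"] show ?thesis by simp
  qed
  also have "knuth_eq (b # a # replicate i' b @ replicate j a @ replicate k c)
                      (replicate (Suc i') b @ replicate (Suc j) a @ replicate k c)"
    using word_cong.wc_sym[OF pull] by simp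
  finally show ?case
    using i by simp
qed

lemma knuth_sorted_snoc_less_hd:
  "sorted r \<Longrightarrow> r \<noteq> [] \<Longrightarrow> e < hd r \<Longrightarrow> knuth_eq (r @ [e]) (hd r # e # tl r)"
proof (induction r)
  case Nil
  then show ?case by simp
next
  case (Cons c r)
  show ?case
  proof (cases r)
    case Nil
    then show ?thesis by (simp add: word_cong.wc_refl)
  next
    case (Cons c' r')
    have ec: "e < c" and cc': "c \<le> c'" using Cons.prems \<open>r = c' # r'\<close> by auto
    have "knuth_eq (c # r @ [e]) (c # c' # e # r')"
      using word_cong_Cons[OF Cons.IH] Cons.prems \<open>r = c' # r'\<close> ec cc' by auto
    also have "knuth_eq (c # c' # e # r') (c # e # c' # r')"
      using word_cong_append_right[OF word_cong.wc_sym[OF knuth_bac[OF ec cc']], of r'] by simp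
    finally show ?thesis using \<open>r = c' # r'\<close> by simp
  qed
qed

lemma knuth_sorted_snoc_descent:
  "sorted r \<Longrightarrow> r \<noteq> [] \<Longrightarrow> e < last r \<Longrightarrow> \<exists>b h w. knuth_eq (r @ [e]) (b # h # w) \<and> h < b"
proof (induction r)
  case Nil
  then show ?case by simp
next
  case (Cons c r)
  show ?case
  proof (cases "e < c")
    case True
    then show ?thesis
      using knuth_sorted_snoc_less_hd[OF Cons.prems(1,2)] by auto
  next
    case False
    then have "r \<noteq> []" using Cons.prems by auto
    then obtain b h w where bhw: "knuth_eq (r @ [e]) (b # h # w)" "h < b"
      using Cons by auto
    have "h \<in># mset (r @ [e])" using knuth_eq_mset[OF bhw(1)] by simp
    then have ch: "c \<le> h" using Cons.prems(1) False by auto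
    have "knuth_eq ((c # r) @ [e]) (c # b # h # w)" using word_cong_Cons[OF bhw(1)] by simp
    also have "knuth_eq (c # b # h # w) (b # c # h # w)"
      using word_cong_append_right[OF knuth_acb[OF ch bhw(2)], of w] by simp
    finally show ?thesis using ch bhw(2) by (intro exI[of _ b] exI[of _ c]) auto
  qed
qed

lemma not_sorted_first_descent:
  "\<not> sorted y \<Longrightarrow> \<exists>r e z. y = r @ e # z \<and> r \<noteq> [] \<and> sorted r \<and> e < last r"
proof (induction y)
  case Nil
  then show ?case by simp
next
  case (Cons x y)
  show ?case
  proof (cases "sorted y")
    case True
    then obtain h y' where "y = h # y'" "h < x"
      using Cons.prems by (cases y) auto
    then show ?thesis by (intro exI[of _ "[x]"]) auto
  next
    case False
    then obtain r e z where rez: "y = r @ e # z" "r \<noteq> []" "sorted r" "e < last r"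
      using Cons.IH by blast
    show ?thesis
    proof (cases "x \<le> hd r")
      case True
      with rez show ?thesis
        by (intro exI[of _ "x # r"]) (cases r, auto)
    next
      case False
      with rez show ?thesis
        by (intro exI[of _ "[x]"] exI[of _ "hd r"] exI[of _ "tl r @ e # z"]) (cases r, auto)
    qed
  qed
qed

lemma knuth_eq_descent_front:
  assumes "\<not> sorted y"
  obtains b h w where "knuth_eq y (b # h # w)" "h < b"
proof -
  obtain r e z where rez: "y = r @ e # z" "r \<noteq> []" "sorted r" "e < last r"
    using not_sorted_first_descent[OF assms] by blast
  obtain b h w where "knuth_eq (r @ [e]) (b # h # w)" "h < b"
    using knuth_sorted_snoc_descent[OF rez(3,2,4)] by blast
  with that show thesis
    using word_cong_append_right[of knuth_rels "r @ [e]" "b # h # w" z] rez(1) by auto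
qed

section \<open>Sliding powers of a letter through a word\<close>

definition slides_through :: "'a::linorder \<Rightarrow> 'a list \<Rightarrow> bool" where
  "slides_through a y \<longleftrightarrow> (\<exists>N. \<forall>p q p' q'. N \<le> p \<longrightarrow> N \<le> q \<longrightarrow> N \<le> p' \<longrightarrow> N \<le> q' \<longrightarrow>
      p + q = p' + q' \<longrightarrow>
      knuth_eq (replicate p a @ y @ replicate q a) (replicate p' a @ y @ replicate q' a))"

lemma slides_through_Nil: "slides_through a []"
  unfolding slides_through_def
  by (intro exI[of _ 0]) (metis append_Nil replicate_add word_cong.wc_refl)

lemma slides_through_transfer:
  assumes "slides_through a y"
    and "\<And>p q. K \<le> p \<Longrightarrow> K \<le> q \<Longrightarrow>
      knuth_eq (replicate (p + k) a @ y' @ replicate (q + l) a)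
               (L @ replicate p a @ y @ replicate q a @ M)"
  shows "slides_through a y'"
proof -
  obtain N where N: "\<And>p q p' q'. N \<le> p \<Longrightarrow> N \<le> q \<Longrightarrow> N \<le> p' \<Longrightarrow> N \<le> q' \<Longrightarrow> p + q = p' + q' \<Longrightarrow>
      knuth_eq (replicate p a @ y @ replicate q a) (replicate p' a @ y @ replicate q' a)"
    using assms(1) unfolding slides_through_def by blast
  have shift: "knuth_eq (replicate p a @ y' @ replicate q a)
                        (L @ replicate (p - k) a @ y @ replicate (q - l) a @ M)"
    if "N + K + k + l \<le> p" "N + K + k + l \<le> q" for p q
    using assms(2)[of "p - k" "q - l"] that by simp
  show ?thesis unfolding slides_through_def
  proof (intro exI[of _ "N + K + k + l"] allI impI)
    fix p q p' q'
    assume bounds: "N + K + k + l \<le> p" "N + K + k + l \<le> q" "N + K + k + l \<le> p'" "N + K + k + l \<le> q'"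
      and sum: "p + q = p' + q'"
    have "knuth_eq (replicate p a @ y' @ replicate q a)
                   (L @ replicate (p - k) a @ y @ replicate (q - l) a @ M)"
      using shift bounds by blast
    also have "knuth_eq (L @ replicate (p - k) a @ y @ replicate (q - l) a @ M)
                        (L @ replicate (p' - k) a @ y @ replicate (q' - l) a @ M)"
      using word_cong_context[OF N[of "p - k" "q - l" "p' - k" "q' - l"], of L M] bounds sum by simp
    also have "knuth_eq (L @ replicate (p' - k) a @ y @ replicate (q' - l) a @ M)
                        (replicate p' a @ y' @ replicate q' a)"
      using word_cong.wc_sym[OF shift] bounds by blast
    finally show "knuth_eq (replicate p a @ y' @ replicate q a)
                           (replicate p' a @ y' @ replicate q' a)" .
  qed
qed

lemma slides_through_Cons_less:
  assumes "s < a" "slides_through a y"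
  shows "slides_through a (s # y)"
  using assms(2)
proof (rule slides_through_transfer[where K = 0 and k = 1 and l = 0 and L = "[a, s]" and M = "[]"])
  fix p q :: nat
  show "knuth_eq (replicate (p + 1) a @ (s # y) @ replicate (q + 0) a)
                 ([a, s] @ replicate p a @ y @ replicate q a @ [])"
    using word_cong_append_right[OF knuth_replicate_snoc_less[OF assms(1), of p],
        of "y @ replicate q a"]
    by simp
qed

lemma slides_through_snoc_greater:
  assumes "a < b" "slides_through a y"
  shows "slides_through a (y @ [b])"
  using assms(2)
proof (rule slides_through_transfer[where K = 0 and k = 0 and l = 1 and L = "[]" and M = "[b, a]"])
  fix p q :: nat
  show "knuth_eq (replicate (p + 0) a @ (y @ [b]) @ replicate (q + 1) a)
                 ([] @ replicate p a @ y @ replicate q a @ [b, a])"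
    using word_cong_append_left[OF knuth_Cons_replicate_greater[OF assms(1), of q],
        of "replicate p a @ y"]
    by simp
qed

lemma slides_through_Cons_jump:
  assumes "a \<le> h" "h < c" "slides_through a (h # t)"
  shows "slides_through a (c # h # t)"
  using assms(3)
proof (rule slides_through_transfer[where K = 0 and k = 0 and l = 0 and L = "[c]" and M = "[]"])
  fix p q :: nat
  have "sorted (replicate p a @ [h])" using assms(1) by (simp add: sorted_append)
  from word_cong_append_right[OF knuth_sorted_jump[OF this assms(2)], of "t @ replicate q a"]
  show "knuth_eq (replicate (p + 0) a @ (c # h # t) @ replicate (q + 0) a)
                 ([c] @ replicate p a @ (h # t) @ replicate q a @ [])"
    by simp
qed

lemma slides_through_knuth_eq:
  assumes "knuth_eq y y'" "slides_through a y'"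
  shows "slides_through a y"
  using assms(2)
proof (rule slides_through_transfer[where K = 0 and k = 0 and l = 0 and L = "[]" and M = "[]"])
  fix p q :: nat
  from word_cong_context[OF assms(1), of "replicate p a" "replicate q a"]
  show "knuth_eq (replicate (p + 0) a @ y @ replicate (q + 0) a)
                 ([] @ replicate p a @ y' @ replicate q a @ [])"
    by simp
qed

lemma slides_through_greater: "\<forall>x\<in>set y. a < x \<Longrightarrow> slides_through a y"
  by (induction y rule: rev_induct) (simp_all add: slides_through_Nil slides_through_snoc_greater)

lemma slides_through_descent:
  assumes "h < b" "a \<noteq> b" "a \<noteq> h" "slides_through a (h # w)" "slides_through a (b # w)"
  shows "slides_through a (b # h # w)"
proof (cases "b < a")
  case True
  then show ?thesis using slides_through_Cons_less assms(4) by blast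
next
  case False
  then have ab: "a < b" using assms(2) by simp
  show ?thesis
  proof (cases "a < h")
    case True
    then show ?thesis using slides_through_Cons_jump[OF _ assms(1,4)] by simp
  next
    case False
    then have ha: "h < a" using assms(3) by simp
    have "slides_through a (h # b # w)" using slides_through_Cons_less[OF ha assms(5)] .
    then show ?thesis
    proof (rule slides_through_transfer[where K = 1 and k = 0 and l = 0 and L = "[]" and M = "[]"])
      fix p q :: nat
      assume "1 \<le> p"
      then obtain p' where p: "p = Suc p'" by (cases p) auto
      have "knuth_eq [a, b, h] [a, h, b]"
        using word_cong.wc_sym[OF knuth_bac[OF ha, of b]] ab by simp
      from word_cong_context[OF this, of "replicate p' a" "w @ replicate q a"]
      show "knuth_eq (replicate (p + 0) a @ (b # h # w) @ replicate (q + 0) a)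
                     ([] @ replicate p a @ (h # b # w) @ replicate q a @ [])"
        by (simp add: p replicate_app_Cons_same)
    qed
  qed
qed

lemma slides_through_if_notin: "a \<notin> set y \<Longrightarrow> slides_through a y"
proof (induction "length y" arbitrary: y rule: less_induct)
  case less
  show ?case
  proof (cases "sorted y")
    case True
    show ?thesis
    proof (cases y)
      case Nil
      then show ?thesis by (simp add: slides_through_Nil)
    next
      case (Cons s y')
      show ?thesis
      proof (cases "s < a")
        case True
        then show ?thesis
          using slides_through_Cons_less less.hyps[of y'] less.prems Cons by simp
      next
        case False
        then have "\<forall>x\<in>set y. a < x"
          using \<open>sorted y\<close> less.prems Cons by fastforce
        then show ?thesis by (rule slides_through_greater)
      qed
    qed
  next
    case False
    then obtain b h w where bhw: "knuth_eq y (b # h # w)" "h < b"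
      by (rule knuth_eq_descent_front)
    have "mset y = mset (b # h # w)" using knuth_eq_mset[OF bhw(1)] .
    then have "a \<notin> set (b # h # w)" and len: "length y = length w + 2"
      using less.prems by (metis set_mset_mset, metis size_mset length_Cons add_2_eq_Suc')
    then have "slides_through a (b # h # w)"
      using less.hyps[of "h # w"] less.hyps[of "b # w"] len
      by (intro slides_through_descent[OF bhw(2)]) auto
    with bhw(1) show ?thesis by (rule slides_through_knuth_eq)
  qed
qed

section \<open>The congruence of Plax(A, sigma)\<close>

lemma plax_sigma_eq_refl: "plax_sigma_eq \<sigma> u u"
  unfolding plax_sigma_eq_def by (rule word_cong.wc_refl)

lemma plax_sigma_eq_sym: "plax_sigma_eq \<sigma> u v \<Longrightarrow> plax_sigma_eq \<sigma> v u"
  unfolding plax_sigma_eq_def by (rule word_cong.wc_sym)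

lemma plax_sigma_eq_trans [trans]:
  "plax_sigma_eq \<sigma> u v \<Longrightarrow> plax_sigma_eq \<sigma> v w \<Longrightarrow> plax_sigma_eq \<sigma> u w"
  unfolding plax_sigma_eq_def by (rule word_cong.wc_trans)

lemma plax_sigma_eq_context:
  "plax_sigma_eq \<sigma> u v \<Longrightarrow> plax_sigma_eq \<sigma> (x @ u @ y) (x @ v @ y)"
  unfolding plax_sigma_eq_def by (rule word_cong_context)

lemma plax_sigma_eq_if_knuth_eq: "knuth_eq u v \<Longrightarrow> plax_sigma_eq \<sigma> u v"
  unfolding plax_sigma_eq_def by (erule word_cong_mono) simp

lemma plax_sigma_eq_power: "plax_sigma_eq \<sigma> (replicate (\<sigma> a) a) [a]"
  unfolding plax_sigma_eq_def by (rule word_cong_relI) (auto simp: power_rels_def)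

lemma plax_sigma_eq_replicate_pump:
  assumes "0 < m"
  shows "plax_sigma_eq \<sigma> (replicate m c) (replicate (m + t * (\<sigma> c - 1)) c)"
proof (induction t)
  case 0
  show ?case by (simp add: plax_sigma_eq_refl)
next
  case (Suc t)
  have step: "plax_sigma_eq \<sigma> (replicate (Suc n) c) (replicate (Suc n + (\<sigma> c - 1)) c)" for n
  proof (cases "\<sigma> c = 0")
    case True
    then show ?thesis by (simp add: plax_sigma_eq_refl)
  next
    case False
    from plax_sigma_eq_context[OF plax_sigma_eq_sym[OF plax_sigma_eq_power[of \<sigma> c]],
        of "replicate n c" "[]"]
    show ?thesis
      using False by (simp add: replicate_add[symmetric] replicate_append_same)
  qed
  obtain n where n: "m + t * (\<sigma> c - 1) = Suc n" using assms by (cases m) auto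
  have "plax_sigma_eq \<sigma> (replicate m c) (replicate (Suc n + (\<sigma> c - 1)) c)"
    using plax_sigma_eq_trans[OF Suc.IH[unfolded n] step[of n]] .
  also have "Suc n + (\<sigma> c - 1) = m + Suc t * (\<sigma> c - 1)"
    using n by simp
  finally show ?case .
qed

lemma plax_sigma_eq_replicate_singleton:
  assumes "0 < n" "n mod (\<sigma> c - 1) = 1 mod (\<sigma> c - 1)"
  shows "plax_sigma_eq \<sigma> (replicate n c) [c]"
proof -
  have "(\<sigma> c - 1) dvd (n - 1)" using assms mod_eq_dvd_iff_nat[of 1 n] by simp
  then obtain t where "n - 1 = (\<sigma> c - 1) * t" by blast
  then have "n = 1 + t * (\<sigma> c - 1)" using assms(1) by (simp add: mult.commute)
  then show ?thesis
    using plax_sigma_eq_sym[OF plax_sigma_eq_replicate_pump[of 1 \<sigma> c t]] by simp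
qed

lemma le_add_mult_pred:
  assumes "2 \<le> (s::nat)"
  shows "n \<le> k + n * (s - 1)"
proof -
  have "n * 1 \<le> n * (s - 1)" using assms by (intro mult_le_mono2) simp
  then show ?thesis by linarith
qed

lemma plax_sigma_eq_slide:
  assumes "c \<notin> set Y" "2 \<le> \<sigma> c" "0 < n" "0 < m" "0 < n'" "0 < m'" "n + m = n' + m'"
  shows "plax_sigma_eq \<sigma> (replicate n c @ Y @ replicate m c) (replicate n' c @ Y @ replicate m' c)"
proof -
  obtain N where N: "\<And>p q p' q'. N \<le> p \<Longrightarrow> N \<le> q \<Longrightarrow> N \<le> p' \<Longrightarrow> N \<le> q' \<Longrightarrow> p + q = p' + q' \<Longrightarrow>
      knuth_eq (replicate p c @ Y @ replicate q c) (replicate p' c @ Y @ replicate q' c)"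
    using slides_through_if_notin[OF assms(1)] unfolding slides_through_def by blast
  define T where "T = N * (\<sigma> c - 1)"
  have "N \<le> T" using le_add_mult_pred[OF assms(2), of N 0] unfolding T_def by simp
  have pump: "plax_sigma_eq \<sigma> (replicate k c @ Y @ replicate l c)
                               (replicate (k + T) c @ Y @ replicate (l + T) c)"
    if "0 < k" "0 < l" for k l
  proof -
    have "plax_sigma_eq \<sigma> (replicate k c @ Y @ replicate l c)
                         (replicate (k + T) c @ Y @ replicate l c)"
      using plax_sigma_eq_context[OF plax_sigma_eq_replicate_pump[OF that(1), of \<sigma> c N], of "[]"]
      unfolding T_def by simp
    also have "plax_sigma_eq \<sigma> \<dots> (replicate (k + T) c @ Y @ replicate (l + T) c)"
      using plax_sigma_eq_context[OF plax_sigma_eq_replicate_pump[OF that(2), of \<sigma> c N],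
          of "replicate (k + T) c @ Y" "[]"]
      unfolding T_def by simp
    finally show ?thesis .
  qed
  have "plax_sigma_eq \<sigma> (replicate n c @ Y @ replicate m c)
                       (replicate (n + T) c @ Y @ replicate (m + T) c)"
    using pump assms by blast
  also have "plax_sigma_eq \<sigma> \<dots> (replicate (n' + T) c @ Y @ replicate (m' + T) c)"
    using N \<open>N \<le> T\<close> assms(7) by (intro plax_sigma_eq_if_knuth_eq) auto
  also have "plax_sigma_eq \<sigma> \<dots> (replicate n' c @ Y @ replicate m' c)"
    using plax_sigma_eq_sym[OF pump] assms by blast
  finally show ?thesis .
qed

section \<open>Inflations and lifting of relations\<close>

inductive inflation :: "'a list \<Rightarrow> 'a list \<Rightarrow> bool" where
  inflation_Nil: "inflation [] []"
| inflation_Cons: "0 < n \<Longrightarrow> inflation U u \<Longrightarrow> inflation (replicate n c @ U) (c # u)"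

lemma inflation_Nil_iff [simp]: "inflation U [] \<longleftrightarrow> U = []"
  by (subst inflation.simps) auto

lemma inflation_Cons_iff:
  "inflation U (c # u) \<longleftrightarrow> (\<exists>n U'. 0 < n \<and> U = replicate n c @ U' \<and> inflation U' u)"
  by (subst inflation.simps) auto

lemma inflation_replicate: "0 < n \<Longrightarrow> inflation (replicate n c) [c]"
  using inflation_Cons[OF _ inflation_Nil, of n c] by simp

lemma inflation_refl: "inflation u u"
proof (induction u)
  case (Cons c u)
  then show ?case using inflation_Cons[of 1 u u c] by simp
qed (rule inflation_Nil)

lemma inflation_append: "inflation U u \<Longrightarrow> inflation W w \<Longrightarrow> inflation (U @ W) (u @ w)"
  by (induction rule: inflation.induct) (simp_all add: inflation_Cons)

lemma inflation_append_inv: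
  "inflation U (x @ y) \<Longrightarrow> \<exists>X Y. U = X @ Y \<and> inflation X x \<and> inflation Y y"
proof (induction x arbitrary: U)
  case Nil
  then show ?case by simp
next
  case (Cons c x)
  then obtain n U' where "0 < n" "U = replicate n c @ U'" "inflation U' (x @ y)"
    by (auto simp: inflation_Cons_iff)
  moreover from Cons.IH[OF this(3)] obtain X Y where "U' = X @ Y" "inflation X x" "inflation Y y"
    by blast
  ultimately show ?case
    using inflation_Cons[of n X x c] by (intro exI[of _ "replicate n c @ X"] exI[of _ Y]) auto
qed

lemma set_inflation: "inflation U u \<Longrightarrow> set U = set u"
  by (induction rule: inflation.induct) auto

definition lifts :: "('a::linorder \<Rightarrow> nat) \<Rightarrow> 'a list \<Rightarrow> 'a list \<Rightarrow> bool" where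
  "lifts \<sigma> u v \<longleftrightarrow> (\<forall>U. inflation U u \<longrightarrow> (\<exists>V. inflation V v \<and> plax_sigma_eq \<sigma> U V))"

lemma lifts_refl: "lifts \<sigma> u u"
  unfolding lifts_def using plax_sigma_eq_refl by blast

lemma lifts_trans: "lifts \<sigma> u v \<Longrightarrow> lifts \<sigma> v w \<Longrightarrow> lifts \<sigma> u w"
  unfolding lifts_def by (meson plax_sigma_eq_trans)

lemma lifts_context: "lifts \<sigma> u v \<Longrightarrow> lifts \<sigma> (x @ u @ y) (x @ v @ y)"
  unfolding lifts_def
proof (intro allI impI)
  fix U
  assume lifts: "\<forall>U. inflation U u \<longrightarrow> (\<exists>V. inflation V v \<and> plax_sigma_eq \<sigma> U V)"
    and "inflation U (x @ u @ y)"
  then obtain X W where "U = X @ W" "inflation X x" "inflation W (u @ y)"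
    using inflation_append_inv by blast
  moreover from \<open>inflation W (u @ y)\<close>
  obtain U' Y where "W = U' @ Y" "inflation U' u" "inflation Y y"
    using inflation_append_inv by blast
  moreover from lifts \<open>inflation U' u\<close> obtain V' where "inflation V' v" "plax_sigma_eq \<sigma> U' V'"
    by blast
  ultimately have "inflation (X @ V' @ Y) (x @ v @ y)" "plax_sigma_eq \<sigma> U (X @ V' @ Y)"
    by (simp_all add: inflation_append plax_sigma_eq_context)
  then show "\<exists>V. inflation V (x @ v @ y) \<and> plax_sigma_eq \<sigma> U V"
    by blast
qed

lemma lifts_swap_front:
  assumes "2 \<le> \<sigma> z"
    and swap: "\<And>i j K. 0 < i \<Longrightarrow> 0 < j \<Longrightarrow> i \<le> K \<Longrightarrow> j \<le> K \<Longrightarrow>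
      knuth_eq (replicate i x @ replicate j y @ replicate K z)
               (replicate j y @ replicate i x @ replicate K z)"
  shows "lifts \<sigma> [x, y, z] [y, x, z]"
  unfolding lifts_def
proof (intro allI impI)
  fix U
  assume "inflation U [x, y, z]"
  then obtain i j k
    where ijk: "0 < i" "0 < j" "0 < k" "U = replicate i x @ replicate j y @ replicate k z"
    by (auto simp: inflation_Cons_iff)
  define K where "K = k + (i + j) * (\<sigma> z - 1)"
  have "i + j \<le> K" "0 < K" unfolding K_def using le_add_mult_pred[OF assms(1)] ijk(3) by simp_all
  then have "i \<le> K" "j \<le> K" by simp_all
  have "plax_sigma_eq \<sigma> U (replicate i x @ replicate j y @ replicate K z)"
    using plax_sigma_eq_context[OF plax_sigma_eq_replicate_pump[OF ijk(3), of \<sigma> z "i + j"],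
        of "replicate i x @ replicate j y" "[]"]
    unfolding ijk(4) K_def by simp
  also have "plax_sigma_eq \<sigma> \<dots> (replicate j y @ replicate i x @ replicate K z)"
    using ijk \<open>i \<le> K\<close> \<open>j \<le> K\<close> by (intro plax_sigma_eq_if_knuth_eq swap)
  finally show "\<exists>V. inflation V [y, x, z] \<and> plax_sigma_eq \<sigma> U V"
    using ijk \<open>0 < K\<close> by (blast intro: inflation_Cons inflation_replicate)
qed

lemma lifts_swap_back:
  assumes "2 \<le> \<sigma> x"
    and swap: "\<And>i j K. 0 < i \<Longrightarrow> 0 < j \<Longrightarrow> i \<le> K \<Longrightarrow> j \<le> K \<Longrightarrow>
      knuth_eq (replicate K x @ replicate i y @ replicate j z)
               (replicate K x @ replicate j z @ replicate i y)"
  shows "lifts \<sigma> [x, y, z] [x, z, y]"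
  unfolding lifts_def
proof (intro allI impI)
  fix U
  assume "inflation U [x, y, z]"
  then obtain k i j
    where kij: "0 < k" "0 < i" "0 < j" "U = replicate k x @ replicate i y @ replicate j z"
    by (auto simp: inflation_Cons_iff)
  define K where "K = k + (i + j) * (\<sigma> x - 1)"
  have "i + j \<le> K" "0 < K" unfolding K_def using le_add_mult_pred[OF assms(1)] kij(1) by simp_all
  then have "i \<le> K" "j \<le> K" by simp_all
  have "plax_sigma_eq \<sigma> U (replicate K x @ replicate i y @ replicate j z)"
    using plax_sigma_eq_context[OF plax_sigma_eq_replicate_pump[OF kij(1), of \<sigma> x "i + j"],
        of "[]" "replicate i y @ replicate j z"]
    unfolding kij(4) K_def by simp
  also have "plax_sigma_eq \<sigma> \<dots> (replicate K x @ replicate j z @ replicate i y)"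
    using kij \<open>i \<le> K\<close> \<open>j \<le> K\<close> by (intro plax_sigma_eq_if_knuth_eq swap)
  finally show "\<exists>V. inflation V [x, z, y] \<and> plax_sigma_eq \<sigma> U V"
    using kij \<open>0 < K\<close> by (blast intro: inflation_Cons inflation_replicate)
qed

lemma lifts_knuth_rels:
  assumes "\<And>a. 2 \<le> \<sigma> a" "(l, r) \<in> knuth_rels"
  shows "lifts \<sigma> l r \<and> lifts \<sigma> r l"
proof -
  from assms(2) consider
      (acb) a b c where "l = [a, c, b]" "r = [c, a, b]" "a \<le> b" "b < c"
    | (bac) a b c where "l = [b, a, c]" "r = [b, c, a]" "a < b" "b \<le> c"
    unfolding knuth_rels_def by blast
  then show ?thesis
  proof cases
    case acb
    have "lifts \<sigma> [a, c, b] [c, a, b]"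
      by (rule lifts_swap_front[where \<sigma> = \<sigma>, OF assms(1)], rule knuth_acb_inflated)
        (use acb in auto)
    moreover have "lifts \<sigma> [c, a, b] [a, c, b]"
      by (rule lifts_swap_front[where \<sigma> = \<sigma>, OF assms(1)], rule word_cong.wc_sym,
          rule knuth_acb_inflated)
        (use acb in auto)
    ultimately show ?thesis using acb by simp
  next
    case bac
    have "lifts \<sigma> [b, a, c] [b, c, a]"
      by (rule lifts_swap_back[where \<sigma> = \<sigma>, OF assms(1)], rule word_cong.wc_sym,
          rule knuth_bac_inflated)
        (use bac in auto)
    moreover have "lifts \<sigma> [b, c, a] [b, a, c]"
      by (rule lifts_swap_back[where \<sigma> = \<sigma>, OF assms(1)], rule knuth_bac_inflated) (use bac in auto)
    ultimately show ?thesis using bac by simp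
  qed
qed

lemma lifts_square:
  assumes "2 \<le> \<sigma> a"
  shows "lifts \<sigma> [a, a] [a]" and "lifts \<sigma> [a] [a, a]"
proof -
  show "lifts \<sigma> [a, a] [a]"
    unfolding lifts_def
  proof (intro allI impI)
    fix U
    assume "inflation U [a, a]"
    then obtain i j where "0 < i" "U = replicate i a @ replicate j a"
      by (auto simp: inflation_Cons_iff)
    then have "inflation U [a]"
      by (simp add: replicate_add[symmetric] inflation_replicate)
    then show "\<exists>V. inflation V [a] \<and> plax_sigma_eq \<sigma> U V"
      using plax_sigma_eq_refl by blast
  qed
  show "lifts \<sigma> [a] [a, a]"
    unfolding lifts_def
  proof (intro allI impI)
    fix U
    assume "inflation U [a]"
    then obtain i where i: "0 < i" "U = replicate i a"
      by (auto simp: inflation_Cons_iff)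
    define V where "V = replicate (i + \<sigma> a - 2) a @ [a]"
    have "inflation V [a, a]"
      using inflation_Cons[OF _ inflation_refl[of "[a]"], of "i + \<sigma> a - 2" a] i(1) assms
      unfolding V_def by simp
    moreover have "plax_sigma_eq \<sigma> U V"
    proof -
      have "i + 1 * (\<sigma> a - 1) = Suc (i + \<sigma> a - 2)" using i(1) assms by simp
      with plax_sigma_eq_replicate_pump[OF i(1), of \<sigma> a 1] show ?thesis
        unfolding i(2) V_def by (simp add: replicate_append_same)
    qed
    ultimately show "\<exists>V. inflation V [a, a] \<and> plax_sigma_eq \<sigma> U V" by blast
  qed
qed

lemma lifts_if_plax_2_eq:
  assumes "\<And>a. 2 \<le> \<sigma> a" "plax_sigma_eq (\<lambda>_. 2) u v"
  shows "lifts \<sigma> u v"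
  using assms(2) unfolding plax_sigma_eq_def
proof (rule word_cong_least_preorder[where P = "lifts \<sigma>"])
  fix l r :: "'a list"
  assume "(l, r) \<in> knuth_rels \<union> power_rels (\<lambda>_. 2)"
  then show "lifts \<sigma> l r \<and> lifts \<sigma> r l"
  proof
    assume "(l, r) \<in> knuth_rels"
    then show ?thesis using lifts_knuth_rels assms(1) by blast
  next
    assume "(l, r) \<in> power_rels (\<lambda>_. 2)"
    then obtain a where "l = [a, a]" "r = [a]"
      unfolding power_rels_def by (auto simp: numeral_2_eq_2)
    then show ?thesis using lifts_square assms(1) by blast
  qed
qed (auto intro: lifts_refl lifts_trans lifts_context)

section \<open>Letter counts and collapsing of inflations\<close>

lemma power_rels_count_mod:
  assumes "0 < \<sigma> a" "(l, r) \<in> power_rels \<sigma>"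
  shows "count (mset l) a mod (\<sigma> a - 1) = count (mset r) a mod (\<sigma> a - 1)"
proof -
  obtain b where b: "l = replicate (\<sigma> b) b" "r = [b]"
    using assms(2) unfolding power_rels_def by blast
  show ?thesis
  proof (cases "a = b")
    case True
    have "\<sigma> a = 1 + (\<sigma> a - 1)" using assms(1) by simp
    then have "\<sigma> a mod (\<sigma> a - 1) = 1 mod (\<sigma> a - 1)" by (metis mod_add_self2)
    with b True show ?thesis by simp
  qed (use b in simp)
qed

lemma plax_sigma_eq_count_mod:
  assumes "0 < \<sigma> a" "plax_sigma_eq \<sigma> u v"
  shows "count (mset u) a mod (\<sigma> a - 1) = count (mset v) a mod (\<sigma> a - 1)"
  using assms(2) unfolding plax_sigma_eq_def
proof (rule word_cong_count_mod)
  fix l r assume "(l, r) \<in> knuth_rels \<union> power_rels \<sigma>"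
  then show "count (mset l) a mod (\<sigma> a - 1) = count (mset r) a mod (\<sigma> a - 1)"
    using knuth_eq_mset[OF word_cong_relI] power_rels_count_mod[where \<sigma> = \<sigma>, OF assms(1)]
    by (metis UnE)
qed

lemma com_sigma_eq_count_mod:
  assumes "0 < \<sigma> a" "com_sigma_eq \<sigma> u v"
  shows "count (mset u) a mod (\<sigma> a - 1) = count (mset v) a mod (\<sigma> a - 1)"
  using assms(2) unfolding com_sigma_eq_def
proof (rule word_cong_count_mod)
  fix l r assume "(l, r) \<in> comm_rels \<union> power_rels \<sigma>"
  then show "count (mset l) a mod (\<sigma> a - 1) = count (mset r) a mod (\<sigma> a - 1)"
    using power_rels_count_mod[where \<sigma> = \<sigma>, OF assms(1)] unfolding comm_rels_def by auto
qed

lemma inflation_Cons_gather: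
  assumes "inflation V (c # v)" "2 \<le> \<sigma> c"
    and "count (mset V) c mod (\<sigma> c - 1) = count (mset (c # v)) c mod (\<sigma> c - 1)"
  obtains V' where "inflation V' v" "plax_sigma_eq \<sigma> V (c # V')"
proof -
  obtain n W where W: "0 < n" "V = replicate n c @ W" "inflation W v"
    using assms(1) by (auto simp: inflation_Cons_iff)
  show thesis
  proof (cases "c \<in> set v")
    case False
    then have "count (mset W) c = 0" "count (mset v) c = 0"
      using set_inflation[OF W(3)] by simp_all
    then have "count (mset V) c = n" "count (mset (c # v)) c = 1"
      using W(2) by (simp_all del: count_mset_0_iff)
    with assms(3) have "n mod (\<sigma> c - 1) = 1 mod (\<sigma> c - 1)"
      by (simp only:)
    from plax_sigma_eq_replicate_singleton[where \<sigma> = \<sigma> and c = c, OF W(1) this]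
    have "plax_sigma_eq \<sigma> V (c # W)"
      using plax_sigma_eq_context[of \<sigma> "replicate n c" "[c]" "[]" W] W(2) by simp
    with W(3) show thesis by (rule that)
  next
    case True
    obtain y z where yz: "v = y @ c # z" "c \<notin> set y"
      using split_list_first[OF True] by blast
    obtain Y m Z where YZ: "W = Y @ replicate m c @ Z" "inflation Y y" "0 < m" "inflation Z z"
      using inflation_append_inv[of W y "c # z"] W(3) yz(1) by (auto simp: inflation_Cons_iff)
    have "c \<notin> set Y" using set_inflation[OF YZ(2)] yz(2) by simp
    have "inflation (Y @ replicate (n + m - 1) c @ Z) v"
      unfolding yz(1) using W(1) YZ by (intro inflation_append inflation_Cons) simp_all
    moreover have "plax_sigma_eq \<sigma> V (c # Y @ replicate (n + m - 1) c @ Z)"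
      using plax_sigma_eq_context[OF plax_sigma_eq_slide[where \<sigma> = \<sigma>, OF \<open>c \<notin> set Y\<close> assms(2),
            of n m 1 "n + m - 1"], of "[]" Z] W(1,2) YZ(1,3)
      by simp
    ultimately show thesis by (rule that)
  qed
qed

lemma plax_sigma_eq_inflation_collapse:
  assumes "inflation V v" "\<And>a. 2 \<le> \<sigma> a"
    and "\<And>a. count (mset V) a mod (\<sigma> a - 1) = count (mset v) a mod (\<sigma> a - 1)"
  shows "plax_sigma_eq \<sigma> V v"
  using assms(1,3)
proof (induction v arbitrary: V rule: list.induct)
  case Nil
  then show ?case by (simp add: plax_sigma_eq_refl)
next
  case (Cons c v)
  obtain V' where V': "inflation V' v" "plax_sigma_eq \<sigma> V (c # V')"
    using inflation_Cons_gather[where \<sigma> = \<sigma>, OF Cons.prems(1) assms(2) Cons.prems(2)] by blast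
  have "count (mset V') a mod (\<sigma> a - 1) = count (mset v) a mod (\<sigma> a - 1)" for a
  proof -
    have "0 < \<sigma> a" using assms(2)[of a] by simp
    from plax_sigma_eq_count_mod[OF this V'(2)] Cons.prems(2)[of a]
    have "(count (mset V') a + (if a = c then 1 else 0)) mod (\<sigma> a - 1)
        = (count (mset v) a + (if a = c then 1 else 0)) mod (\<sigma> a - 1)"
      by (cases "a = c") simp_all
    then show ?thesis by (simp add: nat_mod_eq_iff)
  qed
  then have "plax_sigma_eq \<sigma> V' v" using Cons.IH[OF V'(1)] by blast
  then have "plax_sigma_eq \<sigma> (c # V') (c # v)"
    using plax_sigma_eq_context[of \<sigma> V' v "[c]" "[]"] by simp
  with V'(2) show ?case by (rule plax_sigma_eq_trans)
qed

theorem mainTheorem1: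
  fixes \<sigma> :: "'a::{linorder, finite} \<Rightarrow> nat"
  assumes "\<And>a. \<sigma> a \<ge> 2"
  shows "\<forall>u v :: 'a list.
           plax_sigma_eq (\<lambda>_. 2) u v \<and> com_sigma_eq \<sigma> u v \<longrightarrow> plax_sigma_eq \<sigma> u v"
proof (intro allI impI, elim conjE)
  fix u v :: "'a list"
  assume plax_2: "plax_sigma_eq (\<lambda>_. 2) u v" and com: "com_sigma_eq \<sigma> u v"
  have "lifts \<sigma> u v" using assms plax_2 by (rule lifts_if_plax_2_eq)
  then obtain V where V: "inflation V v" "plax_sigma_eq \<sigma> u V"
    using inflation_refl[of u] unfolding lifts_def by blast
  have "count (mset V) a mod (\<sigma> a - 1) = count (mset v) a mod (\<sigma> a - 1)" for a
  proof -
    have "0 < \<sigma> a" using assms[of a] by simp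
    from plax_sigma_eq_count_mod[OF this V(2)] com_sigma_eq_count_mod[OF this com]
    show ?thesis by simp
  qed
  then have "plax_sigma_eq \<sigma> V v" using V(1) assms by (intro plax_sigma_eq_inflation_collapse)
  with V(2) show "plax_sigma_eq \<sigma> u v" by (rule plax_sigma_eq_trans)
qed

end
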